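(* Let $G$ be a finite undirected graph, $\tau\ge1$ an integer, and $G'$ a subgraph of $G$. Then for every edge $e\in E(G')$, $\phi_\tau(e,G)\ge\phi_\tau(e,G')$.
   Context: Graphs are finite, simple, undirected and unweighted; paths may repeat vertices and their length is the number of edges. For vertices $v,u$ of a graph $H$, $u$ is $\tau$-hop reachable from $v$ in $H$ if there is a path between them in $H$ of length at most $\tau$. $N_\tau(v,H)$ is the set of vertices $u\ne v$ that are $\tau$-hop reachable from $v$ in $H$. For an edge $e=(u,v)$ of $H$, $\Delta_\tau(e,H)=N_\tau(u,H)\cap N_\tau(v,H)$ and $\mathrm{sup}_\tau(e,H)=|\Delta_\tau(e,H)|$. The $(k,\tau)$-truss of a graph $H$ is the maximal subgraph $H'$ of $H$ such that $\mathrm{sup}_\tau(e,H')\ge k-2$ for every $e\in E(H')$ (supports computed inside $H'$) and no more edges of $H$ can be added while keeping this property. The higher-order truss number $\phi_\tau(e,H)$ of an edge $e$ of $H$ is the maximum $k$ such that $e$ belongs to the $(k,\tau)$-truss of $H$. *)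

theory Defs
  imports Main
begin

type_synonym 'a graph = "'a set \<times> 'a set set"

definition verts :: "'a graph \<Rightarrow> 'a set" where "verts H = fst H"
definition edges :: "'a graph \<Rightarrow> 'a set set" where "edges H = snd H"

definition graph :: "'a graph \<Rightarrow> bool" where
  "graph H \<longleftrightarrow> finite (verts H) \<and>
     (\<forall>e\<in>edges H. e \<subseteq> verts H \<and> card e = 2)"

definition subgraph :: "'a graph \<Rightarrow> 'a graph \<Rightarrow> bool" where
  "subgraph H' H \<longleftrightarrow> verts H' \<subseteq> verts H \<and> edges H' \<subseteq> edges H \<and>
     (\<forall>e\<in>edges H'. e \<subseteq> verts H')"

text \<open>A walk (path possibly repeating vertices) given by its vertex sequence;
  its length is the number of edges, i.e. length of the list minus one.\<close>
fun walk :: "'a graph \<Rightarrow> 'a list \<Rightarrow> bool" where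
  "walk H [] = False"
| "walk H [x] = (x \<in> verts H)"
| "walk H (x # y # xs) = ({x, y} \<in> edges H \<and> walk H (y # xs))"

definition hop_reachable :: "nat \<Rightarrow> 'a graph \<Rightarrow> 'a \<Rightarrow> 'a \<Rightarrow> bool" where
  "hop_reachable \<tau> H v u \<longleftrightarrow>
     (\<exists>xs. walk H xs \<and> hd xs = v \<and> last xs = u \<and> length xs - 1 \<le> \<tau>)"

definition nbhd :: "nat \<Rightarrow> 'a \<Rightarrow> 'a graph \<Rightarrow> 'a set" where
  "nbhd \<tau> v H = {u. u \<noteq> v \<and> hop_reachable \<tau> H v u}"

definition sup_edge :: "nat \<Rightarrow> 'a set \<Rightarrow> 'a graph \<Rightarrow> nat" where
  "sup_edge \<tau> e H = card (\<Inter>v\<in>e. nbhd \<tau> v H)"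

definition truss_prop :: "nat \<Rightarrow> nat \<Rightarrow> 'a graph \<Rightarrow> bool" where
  "truss_prop k \<tau> H' \<longleftrightarrow> (\<forall>e\<in>edges H'. int (sup_edge \<tau> e H') \<ge> int k - 2)"

definition is_truss :: "nat \<Rightarrow> nat \<Rightarrow> 'a graph \<Rightarrow> 'a graph \<Rightarrow> bool" where
  "is_truss k \<tau> H H' \<longleftrightarrow> subgraph H' H \<and> truss_prop k \<tau> H' \<and>
     (\<forall>H''. subgraph H'' H \<and> edges H' \<subseteq> edges H'' \<and> truss_prop k \<tau> H''
              \<longrightarrow> edges H'' = edges H')"

definition in_truss :: "nat \<Rightarrow> nat \<Rightarrow> 'a set \<Rightarrow> 'a graph \<Rightarrow> bool" where
  "in_truss k \<tau> e H \<longleftrightarrow> (\<exists>H'. is_truss k \<tau> H H' \<and> e \<in> edges H')"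

definition truss_number :: "nat \<Rightarrow> 'a set \<Rightarrow> 'a graph \<Rightarrow> nat" where
  "truss_number \<tau> e H = (GREATEST k. in_truss k \<tau> e H)"

end

theory Submission
  imports Defs
begin

text \<open>Supports only grow when a graph is enlarged, so the union of all subgraphs of H with
  the (k,\<tau>)-support property again has it and is therefore the (k,\<tau>)-truss of H. The
  (k,\<tau>)-truss of G' is such a subgraph of G, hence it lies inside the (k,\<tau>)-truss of G.
  The argument works for every \<tau>.\<close>

lemma subgraph_refl: "graph G \<Longrightarrow> subgraph G G"
  unfolding graph_def subgraph_def by blast

lemma subgraph_trans: "subgraph A B \<Longrightarrow> subgraph B C \<Longrightarrow> subgraph A C"
  unfolding subgraph_def by blast

lemma graph_subgraph: "graph G \<Longrightarrow> subgraph G' G \<Longrightarrow> graph G'"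
  unfolding graph_def subgraph_def by (blast intro: finite_subset)

lemma edge_nonempty: "graph G \<Longrightarrow> e \<in> edges G \<Longrightarrow> e \<noteq> {}"
  unfolding graph_def by fastforce

lemma walk_subgraph: "subgraph A B \<Longrightarrow> walk A xs \<Longrightarrow> walk B xs"
  unfolding subgraph_def by (induction A xs rule: walk.induct) auto

lemma walk_last_in_verts: "walk A xs \<Longrightarrow> last xs \<in> verts A"
  by (induction A xs rule: walk.induct) auto

lemma nbhd_subset_verts: "nbhd \<tau> v A \<subseteq> verts A"
  unfolding nbhd_def hop_reachable_def using walk_last_in_verts by fastforce

lemma nbhd_subgraph: "subgraph A B \<Longrightarrow> nbhd \<tau> v A \<subseteq> nbhd \<tau> v B"
  unfolding nbhd_def hop_reachable_def using walk_subgraph by blast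

lemma Inter_nbhd_subset_verts:
  assumes "e \<noteq> {}"
  shows "(\<Inter>v\<in>e. nbhd \<tau> v H) \<subseteq> verts H"
proof -
  obtain v where "v \<in> e" using assms by blast
  then have "(\<Inter>v\<in>e. nbhd \<tau> v H) \<subseteq> nbhd \<tau> v H" by (rule INT_lower)
  also have "\<dots> \<subseteq> verts H" by (rule nbhd_subset_verts)
  finally show ?thesis .
qed

lemma sup_edge_le_card_verts:
  assumes "finite (verts H)" and "e \<noteq> {}"
  shows "sup_edge \<tau> e H \<le> card (verts H)"
  unfolding sup_edge_def using assms(1) Inter_nbhd_subset_verts[OF assms(2)] by (rule card_mono)

lemma sup_edge_subgraph:
  assumes "subgraph A B" and "finite (verts B)" and "e \<noteq> {}"
  shows "sup_edge \<tau> e A \<le> sup_edge \<tau> e B"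
proof -
  have "finite (\<Inter>v\<in>e. nbhd \<tau> v B)"
    using Inter_nbhd_subset_verts[OF assms(3)] assms(2) by (rule finite_subset)
  moreover have "(\<Inter>v\<in>e. nbhd \<tau> v A) \<subseteq> (\<Inter>v\<in>e. nbhd \<tau> v B)"
    using nbhd_subgraph[OF assms(1)] by (rule INF_mono')
  ultimately show ?thesis
    unfolding sup_edge_def by (rule card_mono)
qed

definition truss_union :: "nat \<Rightarrow> nat \<Rightarrow> 'a graph \<Rightarrow> 'a graph" where
  "truss_union k \<tau> H =
     (verts H, \<Union>X\<in>{X. subgraph X H \<and> truss_prop k \<tau> X}. edges X)"

lemma verts_truss_union [simp]: "verts (truss_union k \<tau> H) = verts H"
  unfolding truss_union_def verts_def by simp

lemma mem_edges_truss_union: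
  "f \<in> edges (truss_union k \<tau> H) \<longleftrightarrow> (\<exists>X. subgraph X H \<and> truss_prop k \<tau> X \<and> f \<in> edges X)"
  unfolding truss_union_def edges_def snd_conv by blast

lemma subgraph_truss_union:
  assumes "graph H"
  shows "subgraph (truss_union k \<tau> H) H"
proof -
  have "edges (truss_union k \<tau> H) \<subseteq> edges H"
    unfolding subset_iff mem_edges_truss_union subgraph_def by blast
  then show ?thesis
    using assms unfolding subgraph_def graph_def verts_truss_union by blast
qed

lemma subgraph_truss_union_of_truss_prop:
  "subgraph X H \<Longrightarrow> truss_prop k \<tau> X \<Longrightarrow> subgraph X (truss_union k \<tau> H)"
  unfolding subgraph_def verts_truss_union subset_iff mem_edges_truss_union by blast

lemma truss_prop_truss_union:
  assumes "graph H"
  shows "truss_prop k \<tau> (truss_union k \<tau> H)"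
  unfolding truss_prop_def
proof
  fix f assume "f \<in> edges (truss_union k \<tau> H)"
  then obtain X where X: "subgraph X H" "truss_prop k \<tau> X" "f \<in> edges X"
    unfolding mem_edges_truss_union by blast
  have "finite (verts (truss_union k \<tau> H))"
    using assms unfolding graph_def by simp
  moreover have "f \<noteq> {}"
    using edge_nonempty[OF graph_subgraph[OF assms X(1)] X(3)] .
  ultimately have "sup_edge \<tau> f X \<le> sup_edge \<tau> f (truss_union k \<tau> H)"
    using subgraph_truss_union_of_truss_prop[OF X(1,2)] sup_edge_subgraph by blast
  then show "int (sup_edge \<tau> f (truss_union k \<tau> H)) \<ge> int k - 2"
    using X(2,3) unfolding truss_prop_def by fastforce
qed

lemma is_truss_truss_union:
  assumes "graph H"
  shows "is_truss k \<tau> H (truss_union k \<tau> H)"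
proof -
  have "edges X \<subseteq> edges (truss_union k \<tau> H)" if "subgraph X H" and "truss_prop k \<tau> X" for X
    unfolding subset_iff mem_edges_truss_union using that by blast
  then show ?thesis
    unfolding is_truss_def
    using subgraph_truss_union[OF assms] truss_prop_truss_union[OF assms] by blast
qed

lemma in_truss_if_truss_prop_subgraph:
  assumes "graph H" and "subgraph X H" and "truss_prop k \<tau> X" and "e \<in> edges X"
  shows "in_truss k \<tau> e H"
proof -
  have "e \<in> edges (truss_union k \<tau> H)"
    unfolding mem_edges_truss_union using assms(2-4) by blast
  then show ?thesis
    unfolding in_truss_def using is_truss_truss_union[OF assms(1)] by blast
qed

lemma in_truss_subgraph:
  assumes "graph G" and "subgraph G' G" and "in_truss k \<tau> e G'"
  shows "in_truss k \<tau> e G"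
proof -
  obtain H' where "is_truss k \<tau> G' H'" and "e \<in> edges H'"
    using assms(3) unfolding in_truss_def by blast
  then show ?thesis
    using in_truss_if_truss_prop_subgraph[OF assms(1)] subgraph_trans[OF _ assms(2)]
    unfolding is_truss_def by blast
qed

lemma in_truss_bound:
  assumes "graph H" and "e \<noteq> {}" and "in_truss k \<tau> e H"
  shows "k \<le> card (verts H) + 2"
proof -
  obtain H' where H': "is_truss k \<tau> H H'" "e \<in> edges H'"
    using assms(3) unfolding in_truss_def by blast
  then have support: "int (sup_edge \<tau> e H') \<ge> int k - 2"
    unfolding is_truss_def truss_prop_def by blast
  have "verts H' \<subseteq> verts H"
    using H'(1) unfolding is_truss_def subgraph_def by blast
  then have "card (verts H') \<le> card (verts H)"
    using assms(1) unfolding graph_def by (blast intro: card_mono)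
  moreover have "finite (verts H')"
    using \<open>verts H' \<subseteq> verts H\<close> assms(1) unfolding graph_def by (blast intro: finite_subset)
  then have "sup_edge \<tau> e H' \<le> card (verts H')"
    using assms(2) by (rule sup_edge_le_card_verts)
  ultimately show ?thesis using support by linarith
qed

lemma truss_number_ge:
  assumes "graph H" and "e \<noteq> {}" and "in_truss k \<tau> e H"
  shows "k \<le> truss_number \<tau> e H"
  unfolding truss_number_def
  using assms(3) in_truss_bound[OF assms(1,2)] by (rule Greatest_le_nat)

lemma in_truss_truss_number:
  assumes "graph H" and "e \<in> edges H"
  shows "in_truss (truss_number \<tau> e H) \<tau> e H"
proof -
  have "in_truss 0 \<tau> e H"
    using in_truss_if_truss_prop_subgraph[OF assms(1) subgraph_refl[OF assms(1)] _ assms(2)]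
    unfolding truss_prop_def by simp
  then show ?thesis
    unfolding truss_number_def
    using in_truss_bound[OF assms(1) edge_nonempty[OF assms]] by (rule GreatestI_nat)
qed

theorem lemma2:
  fixes G G' :: "'a graph" and \<tau> :: nat and e :: "'a set"
  assumes "graph G" and "\<tau> \<ge> 1" and "subgraph G' G" and "e \<in> edges G'"
  shows "truss_number \<tau> e G \<ge> truss_number \<tau> e G'"
proof -
  have "graph G'" using assms(1,3) by (rule graph_subgraph)
  then have "in_truss (truss_number \<tau> e G') \<tau> e G'"
    using assms(4) by (rule in_truss_truss_number)
  then have "in_truss (truss_number \<tau> e G') \<tau> e G"
    using assms(1,3) in_truss_subgraph by blast
  moreover have "e \<noteq> {}" using \<open>graph G'\<close> assms(4) by (rule edge_nonempty)
  ultimately show ?thesis using assms(1) truss_number_ge by blast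
qed

end
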